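(* Let $n$ be an even integer, $w\le n$, $i,t\le n/2$ and $s\le t$ nonnegative integers. Let ${\mathbf{a}},{\mathbf{b}},{\mathbf{c}},{\mathbf{d}}\in\mathbb{F}_3^{n/2}$ with $a_id_i-b_ic_i=1$ and $a_ic_i\neq0$ for all $i$. Let $\widetilde{{\mathbf{e}}}=({\mathbf{e}}_1,{\mathbf{e}}_2)$ be uniformly distributed over the vectors of $\mathbb{F}_3^n$ of Hamming weight $w$ (with ${\mathbf{e}}_1,{\mathbf{e}}_2\in\mathbb{F}_3^{n/2}$), and $\widetilde{{\mathbf{e}}}_V=-{\mathbf{c}}\odot{\mathbf{e}}_1+{\mathbf{a}}\odot{\mathbf{e}}_2$. Let $\widetilde q_1(i)=\mathbb{P}(|\widetilde{{\mathbf{e}}}_V|=i)$ and $\widetilde q_2(s,t)=\mathbb{P}(m_1(\widetilde{{\mathbf{e}}})=s\mid|\widetilde{{\mathbf{e}}}_V|=t)$. Then $$\widetilde q_1(i)=\frac{\binom{n/2}{i}}{\binom{n}{w}2^{w/2}}\sum_{\substack{p=0\\ w+p\equiv0\bmod 2}}^{i}\binom{i}{p}\binom{n/2-i}{(w+p)/2-i}2^{3p/2},$$ and $$\widetilde q_2(s,t)=\begin{cases}\dfrac{\binom{t}{s}\binom{n/2-t}{\frac{w+s}{2}-t}2^{3s/2}}{\sum_{p\equiv w \bmod 2}\binom{t}{p}\binom{n/2-t}{\frac{w+p}{2}-t}2^{3p/2}} & \text{if } w+s\equiv 0\bmod 2,\\ 0&\text{otherwise.}\end{cases}$$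
   Context: $|{\mathbf{x}}|$ is the Hamming weight; $\odot$ the componentwise product; for ${\mathbf{x}}\in\mathbb{F}_3^n$, $m_1({\mathbf{x}})=|\{1\le i\le n/2: |(x_i,x_{i+n/2})|=1\}|$. Binomial coefficients $\binom{m}{j}$ with $j<0$ or $j>m$ are $0$; $p$ ranges over nonnegative integers with $p\le t$. *)

theory Defs
  imports Complex_Main "HOL-Library.Numeral_Type"
begin

text \<open>Vectors of F_3^n are modelled as functions nat => 3 (3 is the ring Z/3Z from
Numeral_Type) that vanish outside the index range {0..<n}.  Index j < n/2 of
e_1 is e j, index j of e_2 is e (j + n/2).\<close>

definition vecs :: "nat \<Rightarrow> (nat \<Rightarrow> 3) set" where
  "vecs n = {e. \<forall>j\<ge>n. e j = 0}"

definition hw :: "nat \<Rightarrow> (nat \<Rightarrow> 3) \<Rightarrow> nat" where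
  "hw n e = card {j \<in> {0..<n}. e j \<noteq> 0}"

definition eV :: "nat \<Rightarrow> (nat \<Rightarrow> 3) \<Rightarrow> (nat \<Rightarrow> 3) \<Rightarrow> (nat \<Rightarrow> 3) \<Rightarrow> nat \<Rightarrow> 3" where
  "eV n a c e = (\<lambda>j. if j < n div 2 then - c j * e j + a j * e (j + n div 2) else 0)"

definition m1 :: "nat \<Rightarrow> (nat \<Rightarrow> 3) \<Rightarrow> nat" where
  "m1 n e = card {j \<in> {0..<n div 2}.
      card {k \<in> {j, j + n div 2}. e k \<noteq> 0} = 1}"

definition ibinom :: "nat \<Rightarrow> int \<Rightarrow> real" where
  "ibinom m j = (if 0 \<le> j \<and> j \<le> int m then real (m choose nat j) else 0)"

definition wset :: "nat \<Rightarrow> nat \<Rightarrow> (nat \<Rightarrow> 3) set" where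
  "wset n w = {e \<in> vecs n. hw n e = w}"

definition q1 :: "nat \<Rightarrow> nat \<Rightarrow> (nat \<Rightarrow> 3) \<Rightarrow> (nat \<Rightarrow> 3) \<Rightarrow> nat \<Rightarrow> real" where
  "q1 n w a c i = real (card {e \<in> wset n w. hw n (eV n a c e) = i}) / real (card (wset n w))"

text \<open>q2 s t = P(m1(e) = s | |e_V| = t) (ratio of counts; 0 if conditioning event empty).\<close>
definition q2 :: "nat \<Rightarrow> nat \<Rightarrow> (nat \<Rightarrow> 3) \<Rightarrow> (nat \<Rightarrow> 3) \<Rightarrow> nat \<Rightarrow> nat \<Rightarrow> real" where
  "q2 n w a c s t =
     real (card {e \<in> wset n w. m1 n e = s \<and> hw n (eV n a c e) = t})
     / real (card {e \<in> wset n w. hw n (eV n a c e) = t})"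

end

theory Submission
  imports Defs "HOL-Library.FuncSet"
begin

text \<open>Write \<open>h = n/2\<close> and view \<open>e\<close> as the \<open>h\<close> coordinate pairs \<open>(e\<^sub>1\<^sub>j, e\<^sub>2\<^sub>j)\<close>. Because
\<open>a\<^sub>j c\<^sub>j \<noteq> 0\<close>, a pair of weight 0 contributes a zero to \<open>e\<^sub>V\<close>, each of the 4 pairs of weight 1 a
nonzero entry, and of the 4 pairs of weight 2 exactly 2 give a nonzero entry and 2 cancel. Hence
\<open>e\<close> is determined, up to \<open>4\<close>, \<open>2\<close>, \<open>2\<close> or \<open>1\<close> choices per position, by the support \<open>T\<close> of
\<open>e\<^sub>V\<close>, the set \<open>A \<subseteq> T\<close> of weight-1 pairs (so \<open>|A| = m\<^sub>1(e)\<close>) and the set \<open>C\<close>, disjoint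
from \<open>T\<close>, of cancelling weight-2 pairs. The weight of \<open>e\<close> is \<open>|A| + 2|T - A| + 2|C|\<close>, so for
\<open>|T| = i\<close>, \<open>|A| = p\<close> it forces \<open>|C| = (w + p)/2 - i\<close>, and each admissible triple is realised by
\<open>4\<^sup>p 2\<^bsup>i-p+|C|\<^esup> = 2\<^bsup>(w+3p)/2\<^esup>\<close> vectors. Counting the triples gives
\<open>C(h,i) C(i,p) C(h-i,(w+p)/2-i) 2\<^bsup>(w+3p)/2\<^esup>\<close> vectors with \<open>m\<^sub>1 = p\<close> and \<open>|e\<^sub>V| = i\<close>;
summing over \<open>p\<close> and dividing by \<open>C(n,w) 2\<^sup>w\<close> gives both formulas.\<close>

lemma exhaust_3: "(x::3) = 0 \<or> x = 1 \<or> x = 2"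
proof (induct x rule: bit1_induct)
  fix z :: int assume "0 \<le> z" "z < int CARD(1 bit1)"
  then have "z = 0 \<or> z = 1 \<or> z = 2" by simp arith
  then show "of_int z = (0::3) \<or> of_int z = 1 \<or> of_int z = 2" by auto
qed

lemma all_3: "(\<forall>x::3. P x) \<longleftrightarrow> P 0 \<and> P 1 \<and> P 2"
  using exhaust_3 by metis

lemma card_nonzero_3: "card {x :: 3. x \<noteq> 0} = 2"
proof -
  have "{x :: 3. x \<noteq> 0} = {1, 2}" using exhaust_3 by auto
  then show ?thesis by simp
qed

definition pair_weight :: "3 \<Rightarrow> 3 \<Rightarrow> nat" where
  "pair_weight x y = of_bool (x \<noteq> 0) + of_bool (y \<noteq> 0)"

lemma pair_weight_cases: "pair_weight x y = 0 \<or> pair_weight x y = 1 \<or> pair_weight x y = 2"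
  by (simp add: pair_weight_def)

lemma pair_weight_0_imp_zero: "pair_weight x y = 0 \<Longrightarrow> - c * x + a * y = (0::3)"
  by (simp add: pair_weight_def)

lemma pair_weight_1_imp_nonzero:
  fixes a c :: 3
  assumes "a \<noteq> 0" "c \<noteq> 0" "pair_weight x y = 1"
  shows "- c * x + a * y \<noteq> 0"
  using assms exhaust_3[of a] exhaust_3[of c] exhaust_3[of x] exhaust_3[of y]
  by (auto simp: pair_weight_def)

lemma card_pair_weight_0: "card {(x, y). pair_weight x y = 0} = 1"
proof -
  have "{(x, y). pair_weight x y = 0} = {(0, 0)}"
    by (simp add: set_eq_iff split_paired_All all_3 pair_weight_def)
  then show ?thesis by simp
qed

lemma card_pair_weight_1: "card {(x, y). pair_weight x y = 1} = 4"
proof -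
  have "{(x, y). pair_weight x y = 1} = {(1, 0), (2, 0), (0, 1), (0, 2)}"
    by (simp add: set_eq_iff split_paired_All all_3 pair_weight_def)
  then show ?thesis by simp
qed

lemma card_pair_weight_2:
  fixes a c :: 3
  assumes "a \<noteq> 0" "c \<noteq> 0"
  shows "card {(x, y). pair_weight x y = 2 \<and> (- c * x + a * y = 0 \<longleftrightarrow> P)} = 2"
proof -
  have "a = 1 \<or> a = 2" "c = 1 \<or> c = 2" using assms exhaust_3 by blast+
  then have "{(x, y). pair_weight x y = 2 \<and> (- c * x + a * y = 0 \<longleftrightarrow> P)}
      \<in> {{(1, 1), (2, 2)}, {(1, 2), (2, 1)}}"
    by (cases P) (auto simp add: set_eq_iff split_paired_All all_3 pair_weight_def)
  then show ?thesis by auto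
qed

lemma card_pair_class:
  fixes a c :: 3
  assumes "a \<noteq> 0" "c \<noteq> 0" "inA \<longrightarrow> inT" "\<not> (inT \<and> inC)"
  shows "card {(x, y). (inT \<longleftrightarrow> - c * x + a * y \<noteq> 0) \<and> (inA \<longleftrightarrow> pair_weight x y = 1)
                 \<and> (inC \<longleftrightarrow> pair_weight x y = 2 \<and> - c * x + a * y = 0)}
         = (if inA then 4 else 1) * (if inT \<and> \<not> inA \<or> inC then 2 else 1)"
    (is "card ?cls = _")
proof -
  let ?rhs = "if inA then {(x, y). pair_weight x y = 1}
      else if inT \<or> inC then {(x, y). pair_weight x y = 2 \<and> (- c * x + a * y = 0 \<longleftrightarrow> inC)}
      else {(x, y). pair_weight x y = 0}"
  have "?cls = ?rhs"
  proof (intro set_eqI, clarify)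
    fix x y
    show "(x, y) \<in> ?cls \<longleftrightarrow> (x, y) \<in> ?rhs"
      using assms pair_weight_cases[of x y] pair_weight_0_imp_zero[of x y c a]
        pair_weight_1_imp_nonzero[of a c x y]
      by auto
  qed
  then show ?thesis
    using card_pair_weight_0 card_pair_weight_1 card_pair_weight_2[OF assms(1,2), of True]
      card_pair_weight_2[OF assms(1,2), of False] assms(3,4)
    by auto
qed

lemma card_eq_sum_card_fibers:
  assumes "finite X" "finite Y" "f ` X \<subseteq> Y"
  shows "card X = (\<Sum>y\<in>Y. card {x \<in> X. f x = y})"
  using sum.group[OF assms, of "\<lambda>_. 1 :: nat"] by simp

lemma card_eq_card_mult_if_const_fibers:
  assumes "finite X" "finite Y" "f ` X \<subseteq> Y" "\<And>y. y \<in> Y \<Longrightarrow> card {x \<in> X. f x = y} = k"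
  shows "card X = card Y * k"
  using card_eq_sum_card_fibers[OF assms(1-3)] assms(4) by simp

lemma prod_if_mem:
  assumes "finite A" "S \<subseteq> A"
  shows "(\<Prod>j\<in>A. if j \<in> S then k else 1) = k ^ card S"
proof -
  have "{j \<in> A. j \<in> S} = S" using assms(2) by blast
  then show ?thesis using prod.inter_filter[OF assms(1), of "\<lambda>_. k" "\<lambda>j. j \<in> S"] by simp
qed

lemma sum_lessThan_double: "(\<Sum>k<2 * (h::nat). f k) = (\<Sum>j<h. f j + f (j + h))"
proof -
  have "(\<Sum>k<2 * h. f k) = (\<Sum>k\<in>{0..<h}. f k) + (\<Sum>k\<in>{h..<h + h}. f k)"
    by (simp add: mult_2 atLeast0LessThan[symmetric] sum.atLeastLessThan_concat)
  also have "(\<Sum>k\<in>{h..<h + h}. f k) = (\<Sum>j\<in>{0..<h}. f (j + h))"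
    using sum.shift_bounds_nat_ivl[of f 0 h h] by simp
  finally show ?thesis by (simp add: sum.distrib atLeast0LessThan)
qed

lemma card_nested_subsets:
  assumes "finite U"
  shows "card {(T, A, C). T \<subseteq> U \<and> card T = i \<and> A \<subseteq> T \<and> card A = p \<and> C \<subseteq> U - T \<and> card C = k}
       = (card U choose i) * (i choose p) * ((card U - i) choose k)"
proof -
  have "{(T, A, C). T \<subseteq> U \<and> card T = i \<and> A \<subseteq> T \<and> card A = p \<and> C \<subseteq> U - T \<and> card C = k}
      = (SIGMA T:{T. T \<subseteq> U \<and> card T = i}. {A. A \<subseteq> T \<and> card A = p} \<times> {C. C \<subseteq> U - T \<and> card C = k})"
    by auto
  also have "card \<dots> = (\<Sum>T\<in>{T. T \<subseteq> U \<and> card T = i}. (i choose p) * ((card U - i) choose k))"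
  proof (subst card_SigmaI)
    show "finite {T. T \<subseteq> U \<and> card T = i}" using assms by simp
    show "\<forall>T\<in>{T. T \<subseteq> U \<and> card T = i}.
        finite ({A. A \<subseteq> T \<and> card A = p} \<times> {C. C \<subseteq> U - T \<and> card C = k})"
      using assms by (auto intro!: finite_cartesian_product finite_subset[of _ "Pow U"])
    show "(\<Sum>T\<in>{T. T \<subseteq> U \<and> card T = i}.
          card ({A. A \<subseteq> T \<and> card A = p} \<times> {C. C \<subseteq> U - T \<and> card C = k}))
        = (\<Sum>T\<in>{T. T \<subseteq> U \<and> card T = i}. (i choose p) * ((card U - i) choose k))"
      using assms
      by (intro sum.cong) (auto simp: card_cartesian_product n_subsets card_Diff_subset finite_subset)
  qed
  also have "\<dots> = (card U choose i) * (i choose p) * ((card U - i) choose k)"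
    using assms by (simp add: n_subsets)
  finally show ?thesis .
qed

lemma bij_betw_vecs_PiE:
  "bij_betw (\<lambda>e. restrict e {..<n}) {e \<in> vecs n. \<forall>j<n. e j \<in> S j} (PiE {..<n} S)"
  by (rule bij_betw_byWitness[where f' = "\<lambda>f j. if j < n then f j else 0"])
    (auto simp: vecs_def fun_eq_iff PiE_def extensional_def)

lemma bij_betw_vecs_pairs_PiE:
  "bij_betw (\<lambda>e. \<lambda>j\<in>{..<h}. (e j, e (j + h))) {e \<in> vecs (2 * h). \<forall>j<h. (e j, e (j + h)) \<in> S j}
     (PiE {..<h} S)"
  by (rule bij_betw_byWitness[where
        f' = "\<lambda>f k. if k < h then fst (f k) else if k < 2 * h then snd (f (k - h)) else 0"])
    (auto simp: vecs_def fun_eq_iff PiE_def extensional_def)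

lemma card_vecs_PiE: "card {e \<in> vecs n. \<forall>j<n. e j \<in> S j} = (\<Prod>j<n. card (S j))"
  using bij_betw_same_card[OF bij_betw_vecs_PiE] by (simp add: card_PiE)

lemma card_vecs_pairs_PiE:
  "card {e \<in> vecs (2 * h). \<forall>j<h. (e j, e (j + h)) \<in> S j} = (\<Prod>j<h. card (S j))"
  using bij_betw_same_card[OF bij_betw_vecs_pairs_PiE] by (simp add: card_PiE)

lemma finite_vecs: "finite (vecs n)"
  using bij_betw_finite[OF bij_betw_vecs_PiE[of n "\<lambda>_. UNIV"]] by (simp add: finite_PiE)

lemma card_wset: "card (wset n w) = (n choose w) * 2 ^ w"
proof -
  let ?supp = "\<lambda>e. {j. j < n \<and> e j \<noteq> 0}" and ?Y = "{S. S \<subseteq> {..<n} \<and> card S = w}"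
  have "card (wset n w) = card ?Y * 2 ^ w"
  proof (rule card_eq_card_mult_if_const_fibers[where f = ?supp])
    show "finite (wset n w)" using finite_vecs by (simp add: wset_def)
    show "?supp ` wset n w \<subseteq> ?Y" by (auto simp: wset_def hw_def)
    fix S assume S: "S \<in> ?Y"
    have supp_iff: "?supp e = S \<longleftrightarrow> (\<forall>j<n. e j \<in> (if j \<in> S then {x. x \<noteq> 0} else {0}))"
      for e :: "nat \<Rightarrow> 3"
      using S by (auto simp: set_eq_iff)
    have "{e \<in> wset n w. ?supp e = S} = {e \<in> vecs n. ?supp e = S}"
      using S by (auto simp: wset_def hw_def)
    also have "\<dots> = {e \<in> vecs n. \<forall>j<n. e j \<in> (if j \<in> S then {x. x \<noteq> 0} else {0})}"
      by (simp only: supp_iff)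
    also have "card \<dots> = (\<Prod>j<n. if j \<in> S then 2 else 1)"
      by (simp add: card_vecs_PiE if_distrib[of card] card_nonzero_3 cong: if_cong)
    finally show "card {e \<in> wset n w. ?supp e = S} = 2 ^ w"
      using S by (simp add: prod_if_mem)
  qed simp
  then show ?thesis by (simp add: n_subsets)
qed

lemma card_nonzero_pair:
  assumes "j \<noteq> k"
  shows "card {l \<in> {j, k}. e l \<noteq> 0} = pair_weight (e j) (e k)"
proof -
  have "{l \<in> {j, k}. e l \<noteq> 0} = {l \<in> {j}. e l \<noteq> 0} \<union> {l \<in> {k}. e l \<noteq> 0}" by auto
  then show ?thesis using assms by (simp add: pair_weight_def card_Un_disjoint Collect_conv_if)
qed

lemma hw_double_eq_sum_pair_weight: "hw (2 * h) e = (\<Sum>j<h. pair_weight (e j) (e (j + h)))"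
proof -
  have "hw (2 * h) e = (\<Sum>k<2 * h. of_bool (e k \<noteq> 0))"
    by (simp add: hw_def atLeast0LessThan Collect_conj_eq lessThan_def)
  then show ?thesis by (simp add: sum_lessThan_double pair_weight_def)
qed

definition eV_supp :: "nat \<Rightarrow> (nat \<Rightarrow> 3) \<Rightarrow> (nat \<Rightarrow> 3) \<Rightarrow> (nat \<Rightarrow> 3) \<Rightarrow> nat set" where
  "eV_supp h a c e = {j. j < h \<and> - c j * e j + a j * e (j + h) \<noteq> 0}"

definition single_supp :: "nat \<Rightarrow> (nat \<Rightarrow> 3) \<Rightarrow> nat set" where
  "single_supp h e = {j. j < h \<and> pair_weight (e j) (e (j + h)) = 1}"

definition cancel_supp :: "nat \<Rightarrow> (nat \<Rightarrow> 3) \<Rightarrow> (nat \<Rightarrow> 3) \<Rightarrow> (nat \<Rightarrow> 3) \<Rightarrow> nat set" where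
  "cancel_supp h a c e =
     {j. j < h \<and> pair_weight (e j) (e (j + h)) = 2 \<and> - c j * e j + a j * e (j + h) = 0}"

lemma hw_eV_eq_card_eV_supp: "hw (2 * h) (eV (2 * h) a c e) = card (eV_supp h a c e)"
  unfolding hw_def eV_def eV_supp_def by (intro arg_cong[where f = card]) auto

lemma m1_eq_card_single_supp: "m1 (2 * h) e = card (single_supp h e)"
proof -
  have "card {k \<in> {j, j + h}. e k \<noteq> 0} = pair_weight (e j) (e (j + h))" if "j < h" for j
    using that by (intro card_nonzero_pair) simp
  then show ?thesis unfolding m1_def single_supp_def by (intro arg_cong[where f = card]) auto
qed

lemma eV_supp_subset: "eV_supp h a c e \<subseteq> {..<h}"
  by (auto simp: eV_supp_def)

lemma cancel_supp_subset: "cancel_supp h a c e \<subseteq> {..<h} - eV_supp h a c e"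
  by (auto simp: eV_supp_def cancel_supp_def)

lemma single_supp_subset_eV_supp:
  assumes "\<forall>j<h. a j \<noteq> 0 \<and> c j \<noteq> 0"
  shows "single_supp h e \<subseteq> eV_supp h a c e"
  using assms pair_weight_1_imp_nonzero unfolding single_supp_def eV_supp_def by blast

lemma hw_add_card_single_supp:
  assumes nz: "\<forall>j<h. a j \<noteq> 0 \<and> c j \<noteq> 0"
  shows "hw (2 * h) e + card (single_supp h e)
       = 2 * (card (eV_supp h a c e) + card (cancel_supp h a c e))"
proof -
  let ?T = "eV_supp h a c e" and ?A = "single_supp h e" and ?C = "cancel_supp h a c e"
  have pointwise: "pair_weight (e j) (e (j + h)) + of_bool (j \<in> ?A)
      = 2 * (of_bool (j \<in> ?T) + of_bool (j \<in> ?C))" if "j < h" for j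
    using that nz pair_weight_cases[of "e j" "e (j + h)"]
      pair_weight_0_imp_zero[of "e j" "e (j + h)" "c j" "a j"]
      pair_weight_1_imp_nonzero[of "a j" "c j" "e j" "e (j + h)"]
    by (auto simp: eV_supp_def single_supp_def cancel_supp_def)
  have supps: "{..<h} \<inter> ?A = ?A" "{..<h} \<inter> ?T = ?T" "{..<h} \<inter> ?C = ?C"
    by (auto simp: eV_supp_def single_supp_def cancel_supp_def)
  have "hw (2 * h) e + card ?A = (\<Sum>j<h. pair_weight (e j) (e (j + h)) + of_bool (j \<in> ?A))"
    using supps by (simp add: hw_double_eq_sum_pair_weight sum.distrib)
  also have "\<dots> = (\<Sum>j<h. 2 * (of_bool (j \<in> ?T) + of_bool (j \<in> ?C)))"
    by (rule sum.cong) (simp_all add: pointwise)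
  also have "\<dots> = 2 * (card ?T + card ?C)"
    using supps by (simp add: sum.distrib sum_distrib_left[symmetric])
  finally show ?thesis .
qed

lemma card_supps_fiber:
  assumes nz: "\<forall>j<h. a j \<noteq> 0 \<and> c j \<noteq> 0"
    and "A \<subseteq> T" "T \<subseteq> {..<h}" "C \<subseteq> {..<h} - T"
  shows "card {e \<in> vecs (2 * h). eV_supp h a c e = T \<and> single_supp h e = A \<and> cancel_supp h a c e = C}
       = 2 ^ (card A + card T + card C)"
proof -
  let ?cls = "\<lambda>j. {(x, y). (j \<in> T \<longleftrightarrow> - c j * x + a j * y \<noteq> 0) \<and> (j \<in> A \<longleftrightarrow> pair_weight x y = 1)
                 \<and> (j \<in> C \<longleftrightarrow> pair_weight x y = 2 \<and> - c j * x + a j * y = 0)}"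
  have "{e \<in> vecs (2 * h). eV_supp h a c e = T \<and> single_supp h e = A \<and> cancel_supp h a c e = C}
      = {e \<in> vecs (2 * h). \<forall>j<h. (e j, e (j + h)) \<in> ?cls j}"
    using assms(2-4) by (auto simp: eV_supp_def single_supp_def cancel_supp_def)
  then have "card {e \<in> vecs (2 * h). eV_supp h a c e = T \<and> single_supp h e = A \<and> cancel_supp h a c e = C}
      = (\<Prod>j<h. card (?cls j))"
    by (simp only: card_vecs_pairs_PiE)
  also have "\<dots> = (\<Prod>j<h. (if j \<in> A then 4 else 1) * (if j \<in> T - A \<union> C then 2 else 1))"
  proof (rule prod.cong)
    fix j assume "j \<in> {..<h}"
    then have "a j \<noteq> 0" "c j \<noteq> 0" "j \<in> A \<longrightarrow> j \<in> T" "\<not> (j \<in> T \<and> j \<in> C)"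
      using nz assms(2-4) by auto
    then have "card (?cls j) = (if j \<in> A then 4 else 1) * (if j \<in> T \<and> j \<notin> A \<or> j \<in> C then 2 else 1)"
      by (rule card_pair_class)
    then show "card (?cls j) = (if j \<in> A then 4 else 1) * (if j \<in> T - A \<union> C then 2 else 1)"
      by simp
  qed simp
  also have "\<dots> = 4 ^ card A * 2 ^ card (T - A \<union> C)"
  proof -
    have "A \<subseteq> {..<h}" "T - A \<union> C \<subseteq> {..<h}" using assms(2-4) by auto
    then show ?thesis by (simp only: prod.distrib prod_if_mem finite_lessThan)
  qed
  also have "\<dots> = 2 ^ (card A + card T + card C)"
  proof -
    have "finite T" "finite C" using assms(3,4) by (auto intro: finite_subset)
    then have "card (T - A \<union> C) = card (T - A) + card C"
      using assms(4) by (intro card_Un_disjoint) auto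
    also have "card (T - A) = card T - card A"
      using \<open>finite T\<close> assms(2) by (meson card_Diff_subset finite_subset)
    moreover have "card A \<le> card T" using \<open>finite T\<close> assms(2) by (rule card_mono)
    ultimately have "card A + card T + card C = 2 * card A + card (T - A \<union> C)" by simp
    then have "(2::nat) ^ (card A + card T + card C) = 2 ^ (2 * card A) * 2 ^ card (T - A \<union> C)"
      by (metis power_add)
    then show ?thesis by (simp add: power_mult)
  qed
  finally show ?thesis .
qed

lemma wset_m1_eV_iff:
  assumes nz: "\<forall>j<h. a j \<noteq> 0 \<and> c j \<noteq> 0"
  shows "e \<in> wset (2 * h) w \<and> m1 (2 * h) e = p \<and> hw (2 * h) (eV (2 * h) a c e) = i \<longleftrightarrow>
    e \<in> vecs (2 * h) \<and> card (single_supp h e) = p \<and> card (eV_supp h a c e) = i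
      \<and> w + p = 2 * (i + card (cancel_supp h a c e))"
  using hw_add_card_single_supp[OF nz, of e]
  by (auto simp: wset_def m1_eq_card_single_supp hw_eV_eq_card_eV_supp)

lemma card_wset_m1_eV:
  assumes nz: "\<forall>j<h. a j \<noteq> 0 \<and> c j \<noteq> 0"
  shows "card {e \<in> wset (2 * h) w. m1 (2 * h) e = p \<and> hw (2 * h) (eV (2 * h) a c e) = i}
    = (if even (w + p) \<and> 2 * i \<le> w + p
       then (h choose i) * (i choose p) * ((h - i) choose ((w + p) div 2 - i)) * 2 ^ ((w + 3 * p) div 2)
       else 0)"
proof (cases "even (w + p) \<and> 2 * i \<le> w + p")
  case False
  have "\<not> (e \<in> wset (2 * h) w \<and> m1 (2 * h) e = p \<and> hw (2 * h) (eV (2 * h) a c e) = i)" for e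
  proof
    assume "e \<in> wset (2 * h) w \<and> m1 (2 * h) e = p \<and> hw (2 * h) (eV (2 * h) a c e) = i"
    then have "w + p = 2 * (i + card (cancel_supp h a c e))" using wset_m1_eV_iff[OF nz] by blast
    then have "even (w + p)" "2 * i \<le> w + p" by simp_all
    with False show False by blast
  qed
  then have "{e \<in> wset (2 * h) w. m1 (2 * h) e = p \<and> hw (2 * h) (eV (2 * h) a c e) = i} = {}"
    by blast
  then show ?thesis unfolding if_not_P[OF False] by (metis card.empty)
next
  case True
  define k where "k = (w + p) div 2 - i"
  from True have "even (w + p)" by blast
  then obtain m where m: "w + p = 2 * m" by (rule evenE)
  have k_iff: "w + p = 2 * (i + k') \<longleftrightarrow> k' = k" for k'
    using True unfolding k_def m by auto
  let ?E = "{e \<in> wset (2 * h) w. m1 (2 * h) e = p \<and> hw (2 * h) (eV (2 * h) a c e) = i}"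
    and ?Y = "{(T, A, C). T \<subseteq> {..<h} \<and> card T = i \<and> A \<subseteq> T \<and> card A = p \<and> C \<subseteq> {..<h} - T \<and> card C = k}"
    and ?supps = "\<lambda>e. (eV_supp h a c e, single_supp h e, cancel_supp h a c e)"
  have "card ?E = card ?Y * 2 ^ (p + i + k)"
  proof (rule card_eq_card_mult_if_const_fibers[where f = ?supps])
    show "finite ?E" using finite_vecs by (auto simp: wset_def)
    show "finite ?Y"
      by (rule finite_subset[of _ "Pow {..<h} \<times> Pow {..<h} \<times> Pow {..<h}"]) auto
    show "?supps ` ?E \<subseteq> ?Y"
      using wset_m1_eV_iff[OF nz] k_iff eV_supp_subset cancel_supp_subset
        single_supp_subset_eV_supp[OF nz]
      by fastforce
    fix y assume "y \<in> ?Y"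
    then obtain T A C where y: "y = (T, A, C)" and TAC: "T \<subseteq> {..<h}" "card T = i" "A \<subseteq> T"
      "card A = p" "C \<subseteq> {..<h} - T" "card C = k"
      by auto
    have "{e \<in> ?E. ?supps e = y}
        = {e \<in> vecs (2 * h). eV_supp h a c e = T \<and> single_supp h e = A \<and> cancel_supp h a c e = C}"
      using wset_m1_eV_iff[OF nz] k_iff TAC y by auto
    then show "card {e \<in> ?E. ?supps e = y} = 2 ^ (p + i + k)"
      using card_supps_fiber[OF nz TAC(3,1,5)] TAC by simp
  qed
  moreover have "(w + 3 * p) div 2 = p + i + k" using True m by (simp add: k_def)
  ultimately show ?thesis
    using True card_nested_subsets[of "{..<h}" i p k] unfolding k_def[symmetric] by simp
qed

lemma ibinom_of_nat_diff:
  "ibinom m (int a - int b) = (if b \<le> a then real (m choose (a - b)) else 0)"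
proof (cases "b \<le> a")
  case True
  then have "ibinom m (int a - int b) = ibinom m (int (a - b))" by (simp add: of_nat_diff)
  also have "\<dots> = real (m choose (a - b))" by (simp add: ibinom_def binomial_eq_0)
  finally show ?thesis using True by simp
qed (simp add: ibinom_def)

lemma power_half_eq_powr: "even m \<Longrightarrow> (2::real) ^ (m div 2) = 2 powr (real m / 2)"
  by (auto elim!: evenE simp: powr_realpow)

lemma real_card_wset_m1_eV:
  assumes nz: "\<forall>j<h. a j \<noteq> 0 \<and> c j \<noteq> 0"
  shows "real (card {e \<in> wset (2 * h) w. m1 (2 * h) e = p \<and> hw (2 * h) (eV (2 * h) a c e) = i})
    = (if even (w + p) then real (h choose i) * 2 powr (real w / 2) *
         (real (i choose p) * ibinom (h - i) (int ((w + p) div 2) - int i) * 2 powr (3 * real p / 2))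
       else 0)"
proof (cases "even (w + p)")
  case True
  have "(2::real) ^ ((w + 3 * p) div 2) = 2 powr (real w / 2) * 2 powr (3 * real p / 2)"
    using True by (simp add: power_half_eq_powr powr_add[symmetric] add_divide_distrib)
  moreover have "2 * i \<le> w + p \<longleftrightarrow> i \<le> (w + p) div 2" using True by auto
  ultimately show ?thesis
    using True by (simp add: card_wset_m1_eV[OF nz] ibinom_of_nat_diff)
qed (simp add: card_wset_m1_eV[OF nz])

lemma m1_le_hw_eV:
  assumes nz: "\<forall>j<h. a j \<noteq> 0 \<and> c j \<noteq> 0"
  shows "m1 (2 * h) e \<le> hw (2 * h) (eV (2 * h) a c e)"
proof -
  have "finite (eV_supp h a c e)" by (rule finite_subset[OF eV_supp_subset]) simp
  then have "card (single_supp h e) \<le> card (eV_supp h a c e)"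
    using single_supp_subset_eV_supp[OF nz] by (rule card_mono)
  then show ?thesis by (simp add: m1_eq_card_single_supp hw_eV_eq_card_eV_supp)
qed

lemma real_card_wset_eV:
  assumes nz: "\<forall>j<h. a j \<noteq> 0 \<and> c j \<noteq> 0"
  shows "real (card {e \<in> wset (2 * h) w. hw (2 * h) (eV (2 * h) a c e) = i})
    = real (h choose i) * 2 powr (real w / 2) *
      (\<Sum>p \<in> {p. p \<le> i \<and> even (w + p)}.
         real (i choose p) * ibinom (h - i) (int ((w + p) div 2) - int i) * 2 powr (3 * real p / 2))"
proof -
  let ?X = "{e \<in> wset (2 * h) w. hw (2 * h) (eV (2 * h) a c e) = i}"
  have "m1 (2 * h) ` ?X \<subseteq> {..i}"
    using m1_le_hw_eV[OF nz] by fastforce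
  then have "card ?X = (\<Sum>p\<le>i. card {e \<in> ?X. m1 (2 * h) e = p})"
    using finite_vecs by (intro card_eq_sum_card_fibers) (auto simp: wset_def)
  also have "\<dots> = (\<Sum>p\<le>i. card {e \<in> wset (2 * h) w. m1 (2 * h) e = p \<and> hw (2 * h) (eV (2 * h) a c e) = i})"
    by (intro sum.cong arg_cong[where f = card]) auto
  finally have "real (card ?X) = (\<Sum>p\<le>i. if even (w + p) then real (h choose i) * 2 powr (real w / 2) *
         (real (i choose p) * ibinom (h - i) (int ((w + p) div 2) - int i) * 2 powr (3 * real p / 2))
       else 0)"
    by (simp add: real_card_wset_m1_eV[OF nz])
  also have "\<dots> = real (h choose i) * 2 powr (real w / 2) *
      (\<Sum>p \<in> {p. p \<le> i \<and> even (w + p)}.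
         real (i choose p) * ibinom (h - i) (int ((w + p) div 2) - int i) * 2 powr (3 * real p / 2))"
    by (simp add: sum.inter_filter[symmetric] sum_distrib_left atMost_def Collect_conj_eq)
  finally show ?thesis .
qed

theorem proposition5:
  fixes n w i s t :: nat and a b c d :: "nat \<Rightarrow> 3"
  assumes "even n" and "w \<le> n" and "i \<le> n div 2" and "t \<le> n div 2" and "s \<le> t"
    and "\<forall>j < n div 2. a j * d j - b j * c j = 1 \<and> a j * c j \<noteq> 0"
  shows "(q1 n w a c i =
           real (n div 2 choose i) / (real (n choose w) * 2 powr (real w / 2)) *
           (\<Sum>p \<in> {p. p \<le> i \<and> even (w + p)}.
              real (i choose p) * ibinom (n div 2 - i) (int ((w + p) div 2) - int i)
              * 2 powr (3 * real p / 2))) \<and>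
         (q2 n w a c s t =
           (if even (w + s) then
              real (t choose s) * ibinom (n div 2 - t) (int ((w + s) div 2) - int t)
                * 2 powr (3 * real s / 2)
              / (\<Sum>p \<in> {p. p \<le> t \<and> p mod 2 = w mod 2}.
                   real (t choose p) * ibinom (n div 2 - t) (int ((w + p) div 2) - int t)
                   * 2 powr (3 * real p / 2))
            else 0))"
proof -
  define h where "h = n div 2"
  define r where "r = (2::real) powr (real w / 2)"
  define S where "S i = (\<Sum>p \<in> {p. p \<le> i \<and> even (w + p)}.
    real (i choose p) * ibinom (h - i) (int ((w + p) div 2) - int i) * 2 powr (3 * real p / 2))" for i
  have n: "n = 2 * h" using assms(1) by (simp add: h_def)
  \<comment> \<open>Of the determinant condition only \<open>a\<^sub>j c\<^sub>j \<noteq> 0\<close> matters for these counts.\<close>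
  have nz: "\<forall>j<h. a j \<noteq> 0 \<and> c j \<noteq> 0" using assms(6) by (auto simp: h_def)
  have r: "r > 0" "real (card (wset n w)) = real (n choose w) * (r * r)"
    by (simp_all add: r_def card_wset powr_add[symmetric] powr_realpow)
  have "q1 n w a c i = real (h choose i) / (real (n choose w) * r) * S i"
    using r real_card_wset_eV[OF nz, of w i, folded r_def] by (simp add: q1_def n S_def)
  moreover have "q2 n w a c s t = (if even (w + s) then
      real (t choose s) * ibinom (h - t) (int ((w + s) div 2) - int t) * 2 powr (3 * real s / 2) / S t
    else 0)"
  proof -
    have "real (h choose t) * r \<noteq> 0" using assms(4) r by (simp add: h_def)
    then show ?thesis
      using real_card_wset_m1_eV[OF nz, of w s t] real_card_wset_eV[OF nz, of w t]
      by (simp add: q2_def n S_def r_def)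
  qed
  moreover have "{p. p \<le> t \<and> p mod 2 = w mod 2} = {p. p \<le> t \<and> even (w + p)}"
    by (auto simp: mod2_eq_if)
  ultimately show ?thesis by (simp add: h_def r_def S_def)
qed

end
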